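(* Let $X$ be a homogeneous chain and $J$ a proper regular interval of $X$; put $J^-=\{t\in X\mid t<x\ \forall x\in J\}$, $J^+=\{t\in X\mid t>x\ \forall x\in J\}$ and $H=\{g\in\mathrm{Aut}(X)\mid g(x)\in J\ \forall x\in J\}$. Then: (1) $H$ is an open subgroup of $(\mathrm{Aut}(X),\tau_p)$, and hence of $(\mathrm{Aut}(X),\tau_\partial)$; (2) $(H,\tau_p)\cong(\mathrm{Aut}(J^-),\tau_p)\times(\mathrm{Aut}(J),\tau_p)\times(\mathrm{Aut}(J^+),\tau_p)$ and $(H,\tau_\partial)\cong(\mathrm{Aut}(J^-),\tau_\partial)\times(\mathrm{Aut}(J),\tau_\partial)\times(\mathrm{Aut}(J^+),\tau_\partial)$ as topological groups; (3) for every $x\in J$, the stabilizer of $x$ for the action $\mathrm{Aut}(X)\curvearrowright X$ equals $\mathrm{Aut}(J^-)\times \mathrm{St}^J_x\times\mathrm{Aut}(J^+)$, where $\mathrm{St}^J_x$ is the stabilizer of $x$ for the action $\mathrm{Aut}(J)\curvearrowright J$.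
   Context: Chain: linearly ordered set; $\mathrm{Aut}(Y)$: group of order-preserving bijections of a chain $Y$; $X$ homogeneous: $\mathrm{Aut}(X)$ transitive. An interval is a convex subset; an interval $J$ is regular if for all $x,y\in J$ and $g\in\mathrm{Aut}(X)$, $g(x)\in J$ implies $g(y)\in J$; it is proper if it is neither a singleton nor $X$. Automorphisms of $J^-$, $J$, $J^+$ are identified with automorphisms of $X=J^-\cup J\cup J^+$ that are the identity on the other two parts. For a chain $Y$, $\tau_p$ on $\mathrm{Aut}(Y)$ is the topology of pointwise convergence w.r.t. the order topology on $Y$, and $\tau_\partial$ is the permutation topology (identity neighbourhood base: pointwise stabilizers of finite subsets of $Y$). *)

theory Defs
  imports "HOL-Analysis.Analysis"
begin

text \<open>Chains are modelled as subsets of a linearly ordered type. Automorphisms of a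
sub-chain S are order-preserving bijections of S, identified with maps of the whole
type that are the identity outside S.\<close>

definition Aut_on :: "'a::linorder set \<Rightarrow> ('a \<Rightarrow> 'a) set" where
  "Aut_on S = {g. bij_betw g S S \<and> mono_on S g \<and> (\<forall>x. x \<notin> S \<longrightarrow> g x = x)}"

definition homogeneous_chain :: "'a::linorder itself \<Rightarrow> bool" where
  "homogeneous_chain TYPE('a) \<longleftrightarrow> (\<forall>x y::'a. \<exists>g\<in>Aut_on UNIV. g x = y)"

definition is_interval :: "'a::linorder set \<Rightarrow> bool" where
  "is_interval J \<longleftrightarrow> (\<forall>x y z. x \<in> J \<longrightarrow> z \<in> J \<longrightarrow> x \<le> y \<longrightarrow> y \<le> z \<longrightarrow> y \<in> J)"

definition regular_interval :: "'a::linorder set \<Rightarrow> bool" where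
  "regular_interval J \<longleftrightarrow> is_interval J \<and>
     (\<forall>x\<in>J. \<forall>y\<in>J. \<forall>g\<in>Aut_on (UNIV::'a set). g x \<in> J \<longrightarrow> g y \<in> J)"

definition proper_interval :: "'a::linorder set \<Rightarrow> bool" where
  "proper_interval J \<longleftrightarrow> (\<nexists>x. J = {x}) \<and> J \<noteq> UNIV"

definition lower_part :: "'a::linorder set \<Rightarrow> 'a set" where
  "lower_part J = {t. \<forall>x\<in>J. t < x}"

definition upper_part :: "'a::linorder set \<Rightarrow> 'a set" where
  "upper_part J = {t. \<forall>x\<in>J. x < t}"

definition order_top_on :: "'a::linorder set \<Rightarrow> 'a topology" where
  "order_top_on S = topology_generated_by
     ({S} \<union> {{y\<in>S. y < a} | a. a \<in> S} \<union> {{y\<in>S. a < y} | a. a \<in> S})"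

definition pointwise_top :: "('a \<Rightarrow> 'a) set \<Rightarrow> 'a set \<Rightarrow> 'a topology \<Rightarrow> ('a \<Rightarrow> 'a) topology" where
  "pointwise_top G S T = topology_generated_by
     ({G} \<union> {{g\<in>G. g x \<in> U} | x U. x \<in> S \<and> openin T U})"

definition tau_p :: "'a::linorder set \<Rightarrow> ('a \<Rightarrow> 'a) topology" where
  "tau_p S = pointwise_top (Aut_on S) S (order_top_on S)"

definition perm_open :: "('a \<Rightarrow> 'a) set \<Rightarrow> 'a set \<Rightarrow> ('a \<Rightarrow> 'a) set \<Rightarrow> bool" where
  "perm_open G S U \<longleftrightarrow> U \<subseteq> G \<and>
     (\<forall>g\<in>U. \<exists>F. finite F \<and> F \<subseteq> S \<and> (\<lambda>h. g \<circ> h) ` {h\<in>G. \<forall>x\<in>F. h x = x} \<subseteq> U)"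

lemma istopology_perm_open: "istopology (perm_open G S)"
  unfolding istopology_def
proof (intro conjI allI impI)
  fix U V assume U: "perm_open G S U" and V: "perm_open G S V"
  show "perm_open G S (U \<inter> V)"
    unfolding perm_open_def
  proof (intro conjI ballI)
    show "U \<inter> V \<subseteq> G" using U unfolding perm_open_def by blast
  next
    fix g assume g: "g \<in> U \<inter> V"
    obtain F1 where F1: "finite F1" "F1 \<subseteq> S" "(\<lambda>h. g \<circ> h) ` {h\<in>G. \<forall>x\<in>F1. h x = x} \<subseteq> U"
      using U g unfolding perm_open_def by blast
    obtain F2 where F2: "finite F2" "F2 \<subseteq> S" "(\<lambda>h. g \<circ> h) ` {h\<in>G. \<forall>x\<in>F2. h x = x} \<subseteq> V"
      using V g unfolding perm_open_def by blast
    show "\<exists>F. finite F \<and> F \<subseteq> S \<and> (\<lambda>h. g \<circ> h) ` {h\<in>G. \<forall>x\<in>F. h x = x} \<subseteq> U \<inter> V"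
    proof (rule exI[of _ "F1 \<union> F2"], intro conjI)
      show "finite (F1 \<union> F2)" "F1 \<union> F2 \<subseteq> S" using F1 F2 by auto
      have "{h\<in>G. \<forall>x\<in>F1 \<union> F2. h x = x} \<subseteq> {h\<in>G. \<forall>x\<in>F1. h x = x}"
           "{h\<in>G. \<forall>x\<in>F1 \<union> F2. h x = x} \<subseteq> {h\<in>G. \<forall>x\<in>F2. h x = x}" by auto
      then show "(\<lambda>h. g \<circ> h) ` {h\<in>G. \<forall>x\<in>F1 \<union> F2. h x = x} \<subseteq> U \<inter> V"
        using F1(3) F2(3) by (meson image_mono le_inf_iff subset_trans)
    qed
  qed
next
  fix K assume K: "\<forall>U\<in>K. perm_open G S U"
  show "perm_open G S (\<Union>K)"
    unfolding perm_open_def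
  proof (intro conjI ballI)
    show "\<Union>K \<subseteq> G" using K unfolding perm_open_def by blast
  next
    fix g assume "g \<in> \<Union>K"
    then obtain U where "U \<in> K" "g \<in> U" by blast
    then obtain F where "finite F" "F \<subseteq> S" "(\<lambda>h. g \<circ> h) ` {h\<in>G. \<forall>x\<in>F. h x = x} \<subseteq> U"
      using K unfolding perm_open_def by meson
    then show "\<exists>F. finite F \<and> F \<subseteq> S \<and> (\<lambda>h. g \<circ> h) ` {h\<in>G. \<forall>x\<in>F. h x = x} \<subseteq> \<Union>K"
      using \<open>U \<in> K\<close> by blast
  qed
qed

definition tau_d :: "'a::linorder set \<Rightarrow> ('a \<Rightarrow> 'a) topology" where
  "tau_d S = topology (perm_open (Aut_on S) S)"

definition is_subgroup_of :: "('a \<Rightarrow> 'a) set \<Rightarrow> ('a \<Rightarrow> 'a) set \<Rightarrow> bool" where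
  "is_subgroup_of H G \<longleftrightarrow> H \<subseteq> G \<and> id \<in> H \<and> (\<forall>g\<in>H. \<forall>h\<in>H. g \<circ> h \<in> H) \<and> (\<forall>g\<in>H. inv g \<in> H)"

definition top_group_iso3 ::
  "('a \<Rightarrow> 'a) set \<Rightarrow> ('a \<Rightarrow> 'a) topology \<Rightarrow>
   ('a \<Rightarrow> 'a) topology \<Rightarrow> ('a \<Rightarrow> 'a) topology \<Rightarrow> ('a \<Rightarrow> 'a) topology \<Rightarrow>
   (('a \<Rightarrow> 'a) \<Rightarrow> ('a \<Rightarrow> 'a) \<times> ('a \<Rightarrow> 'a) \<times> ('a \<Rightarrow> 'a)) \<Rightarrow> bool" where
  "top_group_iso3 H T TA TB TC \<phi> \<longleftrightarrow>
     homeomorphic_map (subtopology T H) (prod_topology TA (prod_topology TB TC)) \<phi> \<and>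
     (\<forall>g\<in>H. \<forall>h\<in>H. \<phi> (g \<circ> h) =
        (fst (\<phi> g) \<circ> fst (\<phi> h), fst (snd (\<phi> g)) \<circ> fst (snd (\<phi> h)),
         snd (snd (\<phi> g)) \<circ> snd (snd (\<phi> h))))"

end

theory Submission
  imports Defs
begin

text \<open>Regularity of \<open>J\<close> says that an automorphism sending one point of \<open>J\<close> into \<open>J\<close> maps
all of \<open>J\<close> into \<open>J\<close>. Applied to \<open>g \<in> H\<close> and to its inverse, it shows that \<open>g\<close> maps
\<open>J\<close> onto \<open>J\<close>, hence, being monotone, also \<open>J\<^sup>-\<close> onto \<open>J\<^sup>-\<close> and \<open>J\<^sup>+\<close> onto \<open>J\<^sup>+\<close>.
Restricting \<open>g\<close> to the three parts and composing automorphisms of the parts are therefore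
mutually inverse homomorphisms between \<open>H\<close> and \<open>Aut(J\<^sup>-) \<times> Aut(J) \<times> Aut(J\<^sup>+)\<close>. Both are
continuous for \<open>\<tau>\<^sub>p\<close> and for \<open>\<tau>\<^sub>\<partial>\<close>, because a basic neighbourhood in either topology
constrains finitely many points, each of which lies in exactly one part.
\<open>H\<close> is the set of automorphisms sending a fixed \<open>x \<in> J\<close> into \<open>J\<close>. It therefore contains the
cosets of the stabiliser of \<open>x\<close>, so it is \<open>\<tau>\<^sub>\<partial>\<close>-open, and it is \<open>\<tau>\<^sub>p\<close>-open as soon as \<open>J\<close>
is open in the order topology; this holds because homogeneity leaves \<open>J\<close> without endpoints.\<close>

section \<open>Automorphisms of sub-chains\<close>

lemma Aut_on_fixes: "g \<in> Aut_on S \<Longrightarrow> x \<notin> S \<Longrightarrow> g x = x"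
  by (simp add: Aut_on_def)

lemma Aut_on_mem_iff: "g \<in> Aut_on S \<Longrightarrow> g x \<in> S \<longleftrightarrow> x \<in> S"
  by (auto simp: Aut_on_def bij_betw_def)

lemma Aut_on_bij:
  assumes "g \<in> Aut_on S"
  shows "bij g"
proof -
  have "bij_betw g S S" using assms by (simp add: Aut_on_def)
  moreover have "bij_betw g (- S) (- S)"
    using assms bij_betw_cong[of "- S" g id] by (simp add: Aut_on_def)
  ultimately show ?thesis using bij_betw_combine[of g S S "- S" "- S"] by simp
qed

lemma bij_betw_if_preserves:
  assumes "bij g" "\<And>x. g x \<in> S \<longleftrightarrow> x \<in> S"
  shows "bij_betw g S S"
proof (rule bij_betw_subset[OF assms(1) subset_UNIV])
  have "g -` S = S" using assms(2) by blast
  then show "g ` S = S" by (metis assms(1) bij_is_surj surj_image_vimage_eq)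
qed

lemma Aut_on_iff:
  "g \<in> Aut_on S \<longleftrightarrow> bij g \<and> mono_on S g \<and> (\<forall>x. x \<notin> S \<longrightarrow> g x = x)"
proof
  assume "bij g \<and> mono_on S g \<and> (\<forall>x. x \<notin> S \<longrightarrow> g x = x)"
  then have g: "bij g" "mono_on S g" "\<And>x. x \<notin> S \<Longrightarrow> g x = x" by auto
  have "g x \<in> S \<longleftrightarrow> x \<in> S" for x
    using g(3)[of x] g(3)[of "g x"] bij_is_inj[OF g(1)] by (metis injD)
  then have "bij_betw g S S" by (rule bij_betw_if_preserves[OF g(1)])
  then show "g \<in> Aut_on S" using g by (simp add: Aut_on_def)
qed (simp add: Aut_on_bij, simp add: Aut_on_def)

lemma Aut_on_less_iff:
  assumes "g \<in> Aut_on S" "x \<in> S" "y \<in> S"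
  shows "g x < g y \<longleftrightarrow> x < y"
proof -
  have mono: "\<And>u v. u \<in> S \<Longrightarrow> v \<in> S \<Longrightarrow> u \<le> v \<Longrightarrow> g u \<le> g v"
    using assms(1) by (simp add: Aut_on_def mono_on_def)
  have "g x \<noteq> g y" if "x \<noteq> y"
    using that Aut_on_bij[OF assms(1)] by (metis bij_is_inj injD)
  then show ?thesis
    using mono[OF assms(2,3)] mono[OF assms(3,2)] by (auto simp: order_less_le) (meson linear)
qed

lemma Aut_on_id: "id \<in> Aut_on S"
  by (simp add: Aut_on_iff mono_on_def)

lemma Aut_on_comp: "g \<in> Aut_on S \<Longrightarrow> h \<in> Aut_on S \<Longrightarrow> g \<circ> h \<in> Aut_on S"
  by (auto simp: Aut_on_iff mono_on_def bij_comp Aut_on_mem_iff[of h S])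

lemma Aut_on_inv:
  assumes g: "g \<in> Aut_on S"
  shows "inv g \<in> Aut_on S"
proof -
  have b: "bij g" using Aut_on_bij[OF g] .
  have mem: "inv g x \<in> S \<longleftrightarrow> x \<in> S" for x
    using Aut_on_mem_iff[OF g, of "inv g x"] by (simp add: b bij_is_surj surj_f_inv_f)
  have "mono_on S (inv g)"
    unfolding mono_on_def
    using Aut_on_less_iff[OF g] mem b by (metis bij_inv_eq_iff linorder_not_le)
  moreover have "inv g x = x" if "x \<notin> S" for x
    using Aut_on_fixes[OF g that] b by (metis bij_inv_eq_iff)
  ultimately show ?thesis using b by (simp add: Aut_on_iff bij_imp_bij_inv)
qed

lemma Aut_on_interval_subset_UNIV:
  assumes "is_interval S"
  shows "Aut_on S \<subseteq> Aut_on UNIV"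
proof
  fix g assume g: "g \<in> Aut_on S"
  have above: "z < y" if "x \<in> S" "y \<notin> S" "x \<le> y" "z \<in> S" for x y z
    using assms that unfolding is_interval_def by (meson linorder_not_le)
  have below: "y < z" if "x \<in> S" "y \<notin> S" "y \<le> x" "z \<in> S" for x y z
    using assms that unfolding is_interval_def by (meson linorder_not_le)
  have "g x \<le> g y" if "x \<le> y" for x y
    using that g Aut_on_mem_iff[OF g] Aut_on_fixes[OF g] above[of x y "g x"] below[of y x "g y"]
    by (cases "x \<in> S"; cases "y \<in> S") (auto simp: Aut_on_def mono_on_def)
  then show "g \<in> Aut_on UNIV" using Aut_on_bij[OF g] by (simp add: Aut_on_iff mono_on_def)
qed

lemma Aut_on_disjoint_commute:
  assumes "g \<in> Aut_on S" "h \<in> Aut_on T" "S \<inter> T = {}"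
  shows "g \<circ> h = h \<circ> g"
proof
  fix t
  show "(g \<circ> h) t = (h \<circ> g) t"
    using assms by (metis Aut_on_fixes Aut_on_mem_iff comp_apply disjoint_iff)
qed

definition restrict_aut :: "'a set \<Rightarrow> ('a \<Rightarrow> 'a) \<Rightarrow> 'a \<Rightarrow> 'a" where
  "restrict_aut S g t = (if t \<in> S then g t else t)"

lemma restrict_aut_in_Aut_on:
  fixes S :: "'a::linorder set"
  assumes g: "g \<in> Aut_on UNIV" and S: "\<And>t. g t \<in> S \<longleftrightarrow> t \<in> S"
  shows "restrict_aut S g \<in> Aut_on S"
proof -
  have "bij_betw g S S" using Aut_on_bij[OF g] S by (rule bij_betw_if_preserves)
  then have "bij_betw (restrict_aut S g) S S"
    by (rule bij_betw_cong[THEN iffD1, rotated]) (simp add: restrict_aut_def)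
  moreover have "mono_on S (restrict_aut S g)"
    using g by (auto simp: Aut_on_def mono_on_def restrict_aut_def)
  ultimately show ?thesis by (simp add: Aut_on_def restrict_aut_def)
qed

lemma restrict_aut_comp:
  "(\<And>t. t \<in> S \<Longrightarrow> h t \<in> S) \<Longrightarrow> restrict_aut S (g \<circ> h) = restrict_aut S g \<circ> restrict_aut S h"
  by (auto simp: restrict_aut_def)

section \<open>Order topology and the topologies \<open>\<tau>\<^sub>p\<close>, \<open>\<tau>\<^sub>\<partial>\<close>\<close>

lemma is_interval_below_or_above:
  "is_interval S \<Longrightarrow> a \<notin> S \<Longrightarrow> (\<forall>y\<in>S. y < a) \<or> (\<forall>y\<in>S. a < y)"
  unfolding is_interval_def by (meson linorder_not_le)

lemma topspace_order_top_on [simp]: "topspace (order_top_on S) = S"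
  unfolding order_top_on_def topology_generated_by_topspace by auto

lemma openin_order_top_on_rays:
  assumes "is_interval S"
  shows "openin (order_top_on S) ({y. y < a} \<inter> S)" and "openin (order_top_on S) ({y. a < y} \<inter> S)"
proof -
  have basis: "openin (order_top_on S) B"
    if "B \<in> {S} \<union> {{y\<in>S. y < a} | a. a \<in> S} \<union> {{y\<in>S. a < y} | a. a \<in> S}" for B
    unfolding order_top_on_def using that by (rule topology_generated_by_Basis)
  have open_S: "openin (order_top_on S) S" by (rule basis) simp
  consider "a \<in> S" | "\<forall>y\<in>S. y < a" | "\<forall>y\<in>S. a < y"
    using is_interval_below_or_above[OF assms] by blast
  then have "openin (order_top_on S) ({y. y < a} \<inter> S) \<and> openin (order_top_on S) ({y. a < y} \<inter> S)"
  proof cases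
    case 1
    have "{y. y < a} \<inter> S = {y\<in>S. y < a}" "{y. a < y} \<inter> S = {y\<in>S. a < y}" by blast+
    moreover have "openin (order_top_on S) {y\<in>S. y < a}" by (rule basis) (use 1 in blast)
    moreover have "openin (order_top_on S) {y\<in>S. a < y}" by (rule basis) (use 1 in blast)
    ultimately show ?thesis by simp
  next
    case 2
    then have "{y. y < a} \<inter> S = S" "{y. a < y} \<inter> S = {}" by auto
    with open_S show ?thesis by simp
  next
    case 3
    then have "{y. y < a} \<inter> S = {}" "{y. a < y} \<inter> S = S" by auto
    with open_S show ?thesis by simp
  qed
  then show "openin (order_top_on S) ({y. y < a} \<inter> S)" "openin (order_top_on S) ({y. a < y} \<inter> S)"
    by blast+
qed

lemma openin_order_top_on_UNIV_rays:
  "openin (order_top_on UNIV) {y. y < a}" "openin (order_top_on UNIV) {y. a < y}"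
  using openin_order_top_on_rays[of UNIV a] by (simp_all add: is_interval_def)

lemma order_top_on_interval_eq_subtopology:
  assumes "is_interval S"
  shows "order_top_on S = subtopology (order_top_on UNIV) S"
proof -
  have "continuous_map (order_top_on S) (order_top_on UNIV) id"
    unfolding order_top_on_def[of UNIV]
    by (rule continuous_on_generated_topo)
      (use openin_order_top_on_rays[OF assms] openin_topspace[of "order_top_on S"] in auto)
  then have to_sub: "continuous_map (order_top_on S) (subtopology (order_top_on UNIV) S) id"
    by (simp add: continuous_map_in_subtopology)
  have from_sub: "continuous_map (subtopology (order_top_on UNIV) S) (order_top_on S) id"
    unfolding order_top_on_def[of S]
  proof (rule continuous_on_generated_topo)
    fix U assume "U \<in> {S} \<union> {{y\<in>S. y < a} | a. a \<in> S} \<union> {{y\<in>S. a < y} | a. a \<in> S}"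
    then consider "U = S" | a where "U = {y. y < a} \<inter> S" | a where "U = {y. a < y} \<inter> S"
      by blast
    then show "openin (subtopology (order_top_on UNIV) S) (id -` U \<inter> topspace (subtopology (order_top_on UNIV) S))"
      by cases (simp_all add: Int_assoc openin_subtopology_refl openin_subtopology_Int openin_order_top_on_UNIV_rays)
  qed auto
  show ?thesis
    using homeomorphic_maps_id[of "subtopology (order_top_on UNIV) S" "order_top_on S"] to_sub from_sub
    by (simp add: homeomorphic_maps_def)
qed

lemma topspace_tau_p [simp]: "topspace (tau_p S) = Aut_on S"
  unfolding tau_p_def pointwise_top_def topology_generated_by_topspace by auto

lemma openin_tau_p_subbasic:
  "x \<in> S \<Longrightarrow> openin (order_top_on S) U \<Longrightarrow> openin (tau_p S) {g \<in> Aut_on S. g x \<in> U}"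
  unfolding tau_p_def pointwise_top_def by (rule topology_generated_by_Basis) blast

lemma continuous_map_tau_p_eval_on:
  assumes "x \<in> S"
  shows "continuous_map (tau_p S) (order_top_on S) (\<lambda>g. g x)"
  unfolding continuous_map_def
proof (intro conjI allI impI)
  show "(\<lambda>g. g x) \<in> topspace (tau_p S) \<rightarrow> topspace (order_top_on S)"
    using assms by (auto simp: Aut_on_mem_iff)
  fix U assume "openin (order_top_on S) U"
  then show "openin (tau_p S) {g \<in> topspace (tau_p S). g x \<in> U}"
    using openin_tau_p_subbasic[OF assms] by simp
qed

lemma continuous_map_tau_p_iff:
  "continuous_map X (tau_p S) f \<longleftrightarrow>
     f ` topspace X \<subseteq> Aut_on S \<and> (\<forall>x\<in>S. continuous_map X (order_top_on S) (\<lambda>p. f p x))"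
proof
  assume f: "continuous_map X (tau_p S) f"
  have "continuous_map X (order_top_on S) (\<lambda>p. f p x)" if "x \<in> S" for x
    using continuous_map_compose[OF f continuous_map_tau_p_eval_on[OF that]] by (simp add: o_def)
  moreover have "f ` topspace X \<subseteq> Aut_on S"
    using continuous_map_image_subset_topspace[OF f] by simp
  ultimately show "f ` topspace X \<subseteq> Aut_on S \<and> (\<forall>x\<in>S. continuous_map X (order_top_on S) (\<lambda>p. f p x))"
    by blast
next
  assume "f ` topspace X \<subseteq> Aut_on S \<and> (\<forall>x\<in>S. continuous_map X (order_top_on S) (\<lambda>p. f p x))"
  then have im: "f ` topspace X \<subseteq> Aut_on S"
    and eval: "\<And>x. x \<in> S \<Longrightarrow> continuous_map X (order_top_on S) (\<lambda>p. f p x)" by blast+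
  show "continuous_map X (tau_p S) f"
    unfolding tau_p_def pointwise_top_def
  proof (rule continuous_on_generated_topo)
    fix U assume "U \<in> {Aut_on S} \<union> {{g\<in>Aut_on S. g x \<in> U} | x U. x \<in> S \<and> openin (order_top_on S) U}"
    then consider "U = Aut_on S"
      | x V where "U = {g\<in>Aut_on S. g x \<in> V}" "x \<in> S" "openin (order_top_on S) V"
      by blast
    then show "openin X (f -` U \<inter> topspace X)"
    proof cases
      case 1
      then have "f -` U \<inter> topspace X = topspace X" using im by auto
      then show ?thesis by simp
    next
      case 2
      then have "f -` U \<inter> topspace X = {p \<in> topspace X. f p x \<in> V}" using im by auto
      moreover have "openin X {p \<in> topspace X. f p x \<in> V}"
        using eval[OF 2(2)] 2(3) by (simp add: continuous_map_def)
      ultimately show ?thesis by simp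
    qed
  qed (use im in auto)
qed

lemma continuous_map_tau_p_eval:
  assumes "is_interval S" "x \<in> S"
  shows "continuous_map (tau_p S) (order_top_on UNIV) (\<lambda>g. g x)"
  using continuous_map_tau_p_eval_on[OF assms(2)] order_top_on_interval_eq_subtopology[OF assms(1)]
    continuous_map_in_subtopology by metis

definition stabilizer_on :: "'a::linorder set \<Rightarrow> 'a set \<Rightarrow> ('a \<Rightarrow> 'a) set" where
  "stabilizer_on S F = {h \<in> Aut_on S. \<forall>x\<in>F. h x = x}"

lemma openin_tau_d_iff:
  "openin (tau_d S) U \<longleftrightarrow>
     U \<subseteq> Aut_on S \<and> (\<forall>g\<in>U. \<exists>F. finite F \<and> F \<subseteq> S \<and> (\<circ>) g ` stabilizer_on S F \<subseteq> U)"
  unfolding tau_d_def topology_inverse'[OF istopology_perm_open]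
  by (simp add: perm_open_def stabilizer_on_def)

lemma topspace_tau_d [simp]: "topspace (tau_d S) = Aut_on S"
proof -
  have "openin (tau_d S) (Aut_on S)"
    by (auto simp: openin_tau_d_iff stabilizer_on_def intro!: exI[of _ "{}"] Aut_on_comp)
  then show ?thesis using openin_subset[of "tau_d S"] openin_tau_d_iff
    by (metis openin_topspace subset_antisym)
qed

lemma stabilizer_on_comp: "h \<in> stabilizer_on S F \<Longrightarrow> k \<in> stabilizer_on S F \<Longrightarrow> h \<circ> k \<in> stabilizer_on S F"
  by (simp add: stabilizer_on_def Aut_on_comp)

lemma id_in_stabilizer_on: "id \<in> stabilizer_on S F"
  by (simp add: stabilizer_on_def Aut_on_id)

lemma openin_tau_d_coset:
  assumes "g \<in> Aut_on S" "finite F" "F \<subseteq> S"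
  shows "openin (tau_d S) ((\<circ>) g ` stabilizer_on S F)"
  unfolding openin_tau_d_iff
proof (intro conjI ballI)
  show "(\<circ>) g ` stabilizer_on S F \<subseteq> Aut_on S"
    using assms(1) by (auto simp: stabilizer_on_def Aut_on_comp)
next
  fix g' assume "g' \<in> (\<circ>) g ` stabilizer_on S F"
  then obtain h where h: "h \<in> stabilizer_on S F" "g' = g \<circ> h" by blast
  have "(\<circ>) g' ` stabilizer_on S F \<subseteq> (\<circ>) g ` stabilizer_on S F"
    using h stabilizer_on_comp by (auto simp: o_assoc[symmetric] intro!: imageI)
  then show "\<exists>F'. finite F' \<and> F' \<subseteq> S \<and> (\<circ>) g' ` stabilizer_on S F' \<subseteq> (\<circ>) g ` stabilizer_on S F"
    using assms by blast
qed

lemma continuous_map_into_tau_d: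
  assumes into: "f ` topspace X \<subseteq> Aut_on S"
    and nbhd: "\<And>p F. p \<in> topspace X \<Longrightarrow> finite F \<Longrightarrow> F \<subseteq> S \<Longrightarrow>
      \<exists>V. openin X V \<and> p \<in> V \<and> f ` V \<subseteq> (\<circ>) (f p) ` stabilizer_on S F"
  shows "continuous_map X (tau_d S) f"
  unfolding continuous_map_def
proof (intro conjI allI impI)
  show "f \<in> topspace X \<rightarrow> topspace (tau_d S)" using into by auto
next
  fix U assume "openin (tau_d S) U"
  then have U: "\<And>g. g \<in> U \<Longrightarrow> \<exists>F. finite F \<and> F \<subseteq> S \<and> (\<circ>) g ` stabilizer_on S F \<subseteq> U"
    unfolding openin_tau_d_iff by blast
  show "openin X {p \<in> topspace X. f p \<in> U}"
  proof (subst openin_subopen, intro ballI)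
    fix p assume p: "p \<in> {p \<in> topspace X. f p \<in> U}"
    then have "f p \<in> U" by simp
    then obtain F where "finite F" "F \<subseteq> S" "(\<circ>) (f p) ` stabilizer_on S F \<subseteq> U"
      using U by meson
    moreover obtain V where V: "openin X V" "p \<in> V" "f ` V \<subseteq> (\<circ>) (f p) ` stabilizer_on S F"
      using nbhd[of p F] p \<open>finite F\<close> \<open>F \<subseteq> S\<close> by blast
    ultimately have "V \<subseteq> {p \<in> topspace X. f p \<in> U}"
      using openin_subset[OF V(1)] by blast
    then show "\<exists>T. openin X T \<and> p \<in> T \<and> T \<subseteq> {p \<in> topspace X. f p \<in> U}"
      using V by blast
  qed
qed

section \<open>Regular intervals\<close>

lemma is_interval_lower_part: "is_interval (lower_part J)"
  by (auto simp: is_interval_def lower_part_def)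

lemma is_interval_upper_part: "is_interval (upper_part J)"
  by (auto simp: is_interval_def upper_part_def)

lemma Aut_on_UNIV_lower_part_iff:
  "g \<in> Aut_on UNIV \<Longrightarrow> g t \<in> lower_part (g ` J) \<longleftrightarrow> t \<in> lower_part J"
  by (simp add: lower_part_def Aut_on_less_iff)

lemma Aut_on_UNIV_upper_part_iff:
  "g \<in> Aut_on UNIV \<Longrightarrow> g t \<in> upper_part (g ` J) \<longleftrightarrow> t \<in> upper_part J"
  by (simp add: upper_part_def Aut_on_less_iff)

lemma regular_interval_unbounded:
  assumes hom: "homogeneous_chain TYPE('a::linorder)" and reg: "regular_interval J"
    and prp: "proper_interval J" and x: "x \<in> (J :: 'a set)"
  shows "\<exists>z\<in>J. x < z" and "\<exists>z\<in>J. z < x"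
proof -
  have flip: "\<exists>z\<in>J. (y < x \<longrightarrow> x < z) \<and> (x < y \<longrightarrow> z < x)" if y: "y \<in> J" for y
  proof -
    obtain g where g: "g \<in> Aut_on UNIV" "g y = x"
      using hom unfolding homogeneous_chain_def by blast
    have "g x \<in> J" using reg g y x unfolding regular_interval_def by metis
    then show ?thesis using Aut_on_less_iff[OF g(1)] g(2) by blast
  qed
  obtain y where "y \<in> J" "y \<noteq> x" using prp x unfolding proper_interval_def by blast
  then show "\<exists>z\<in>J. x < z" "\<exists>z\<in>J. z < x"
    using flip[of y] by (meson linorder_neq_iff)+
qed

lemma regular_interval_open:
  assumes "homogeneous_chain TYPE('a::linorder)" "regular_interval J" "proper_interval (J :: 'a set)"
  shows "openin (order_top_on UNIV) J"
proof -
  have "J = \<Union>{{y. a < y} \<inter> {y. y < b} | a b. a \<in> J \<and> b \<in> J}"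
  proof
    show "J \<subseteq> \<Union>{{y. a < y} \<inter> {y. y < b} | a b. a \<in> J \<and> b \<in> J}"
      using regular_interval_unbounded[OF assms] by blast
    show "\<Union>{{y. a < y} \<inter> {y. y < b} | a b. a \<in> J \<and> b \<in> J} \<subseteq> J"
      using assms(2) unfolding regular_interval_def is_interval_def by (auto intro: less_imp_le)
  qed
  moreover have "openin (order_top_on UNIV) (\<Union>{{y. a < y} \<inter> {y. y < b} | a b. a \<in> J \<and> b \<in> J})"
    by (rule openin_Union) (auto intro!: openin_Int openin_order_top_on_UNIV_rays)
  ultimately show ?thesis by simp
qed

lemma continuous_map_restrict_aut_tau_p:
  assumes S: "is_interval S" and G: "G \<subseteq> Aut_on UNIV" "\<And>g t. g \<in> G \<Longrightarrow> g t \<in> S \<longleftrightarrow> t \<in> S"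
  shows "continuous_map (subtopology (tau_p UNIV) G) (tau_p S) (restrict_aut S)"
  unfolding continuous_map_tau_p_iff
proof (intro conjI ballI)
  show "restrict_aut S ` topspace (subtopology (tau_p UNIV) G) \<subseteq> Aut_on S"
    using G by (auto intro: restrict_aut_in_Aut_on)
next
  fix x assume x: "x \<in> S"
  have "continuous_map (subtopology (tau_p UNIV) G) (order_top_on UNIV) (\<lambda>g. g x)"
    by (rule continuous_map_from_subtopology, rule continuous_map_tau_p_eval) (simp_all add: is_interval_def)
  then have "continuous_map (subtopology (tau_p UNIV) G) (order_top_on S) (\<lambda>g. g x)"
    unfolding order_top_on_interval_eq_subtopology[OF S] continuous_map_in_subtopology
    using G(2) x by auto
  then show "continuous_map (subtopology (tau_p UNIV) G) (order_top_on S) (\<lambda>g. restrict_aut S g x)"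
    using x by (simp add: restrict_aut_def)
qed

lemma continuous_map_restrict_aut_tau_d:
  assumes G: "is_subgroup_of G (Aut_on UNIV)" "\<And>g t. g \<in> G \<Longrightarrow> g t \<in> S \<longleftrightarrow> t \<in> S"
  shows "continuous_map (subtopology (tau_d UNIV) G) (tau_d S) (restrict_aut S)"
proof (rule continuous_map_into_tau_d)
  have G_Aut: "G \<subseteq> Aut_on UNIV" using G(1) by (simp add: is_subgroup_of_def)
  then show "restrict_aut S ` topspace (subtopology (tau_d UNIV) G) \<subseteq> Aut_on S"
    using G(2) by (auto intro: restrict_aut_in_Aut_on)
  fix g F assume g: "g \<in> topspace (subtopology (tau_d UNIV) G)" and F: "finite F" "F \<subseteq> S"
  let ?V = "(\<circ>) g ` stabilizer_on UNIV F \<inter> G"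
  have "openin (subtopology (tau_d UNIV) G) ?V"
    using g F by (auto intro: openin_subtopology_Int openin_tau_d_coset)
  moreover have "g \<in> ?V" using g id_in_stabilizer_on[of UNIV F] by (auto intro: image_eqI[of _ _ id])
  moreover have "restrict_aut S ` ?V \<subseteq> (\<circ>) (restrict_aut S g) ` stabilizer_on S F"
  proof
    fix k assume "k \<in> restrict_aut S ` ?V"
    then obtain h where h: "h \<in> stabilizer_on UNIV F" "g \<circ> h \<in> G" "k = restrict_aut S (g \<circ> h)"
      by blast
    have "g \<in> Aut_on UNIV" using g G_Aut by auto
    then have "h = inv g \<circ> (g \<circ> h)"
      by (simp add: fun_eq_iff inv_f_f bij_is_inj Aut_on_bij)
    then have "h \<in> G" using G(1) g h(2) unfolding is_subgroup_of_def by (metis IntD2 topspace_subtopology)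
    then have "restrict_aut S h \<in> stabilizer_on S F"
      using G_Aut G(2) h(1) F(2) by (auto simp: stabilizer_on_def restrict_aut_def intro!: restrict_aut_in_Aut_on)
    moreover have "k = restrict_aut S g \<circ> restrict_aut S h"
      using h(3) G(2)[OF \<open>h \<in> G\<close>] by (simp add: restrict_aut_comp)
    ultimately show "k \<in> (\<circ>) (restrict_aut S g) ` stabilizer_on S F" by blast
  qed
  ultimately show "\<exists>V. openin (subtopology (tau_d UNIV) G) V \<and> g \<in> V \<and>
      restrict_aut S ` V \<subseteq> (\<circ>) (restrict_aut S g) ` stabilizer_on S F"
    by blast
qed

section \<open>Splitting along a nonempty interval\<close>

locale nonempty_interval =
  fixes J :: "'a::linorder set"
  assumes interval: "is_interval J" and nonempty: "J \<noteq> {}"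
begin

abbreviation "Jm \<equiv> lower_part J"
abbreviation "Jp \<equiv> upper_part J"

lemma parts_cover: "t \<in> Jm \<or> t \<in> J \<or> t \<in> Jp"
proof (rule ccontr)
  assume "\<not> ?thesis"
  then obtain x z where "x \<in> J" "z \<in> J" "x \<le> t" "t \<le> z" "t \<notin> J"
    by (auto simp: lower_part_def upper_part_def not_less)
  then show False using interval unfolding is_interval_def by blast
qed

lemma parts_disjoint: "Jm \<inter> J = {}" "J \<inter> Jp = {}" "Jm \<inter> Jp = {}"
  using nonempty by (auto simp: lower_part_def upper_part_def) (meson less_asym)

lemma comp_parts_apply:
  assumes a: "a \<in> Aut_on Jm" and b: "b \<in> Aut_on J" and c: "c \<in> Aut_on Jp"
  shows "t \<in> Jm \<Longrightarrow> (a \<circ> b \<circ> c) t = a t"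
    and "t \<in> J \<Longrightarrow> (a \<circ> b \<circ> c) t = b t"
    and "t \<in> Jp \<Longrightarrow> (a \<circ> b \<circ> c) t = c t"
proof -
  assume "t \<in> Jm"
  then have "b t = t" "c t = t" using parts_disjoint by (blast intro: Aut_on_fixes[OF b] Aut_on_fixes[OF c])+
  then show "(a \<circ> b \<circ> c) t = a t" by simp
next
  assume "t \<in> J"
  then have "c t = t" "b t \<in> J" using parts_disjoint Aut_on_mem_iff[OF b] by (blast intro: Aut_on_fixes[OF c])+
  then have "a (b t) = b t" "c t = t" using parts_disjoint by (blast intro: Aut_on_fixes[OF a])+
  then show "(a \<circ> b \<circ> c) t = b t" by simp
next
  assume "t \<in> Jp"
  then have "c t \<in> Jp" using Aut_on_mem_iff[OF c] by blast
  then have "b (c t) = c t" "a (c t) = c t"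
    using parts_disjoint by (blast intro: Aut_on_fixes[OF a] Aut_on_fixes[OF b])+
  then show "(a \<circ> b \<circ> c) t = c t" by simp
qed

lemma comp_parts_in_Aut_on_UNIV:
  assumes "a \<in> Aut_on Jm" "b \<in> Aut_on J" "c \<in> Aut_on Jp"
  shows "a \<circ> b \<circ> c \<in> Aut_on UNIV"
  using assms Aut_on_interval_subset_UNIV[OF is_interval_lower_part]
    Aut_on_interval_subset_UNIV[OF interval] Aut_on_interval_subset_UNIV[OF is_interval_upper_part]
  by (blast intro: Aut_on_comp)

lemma comp_parts_mult:
  assumes "a \<in> Aut_on Jm" "b \<in> Aut_on J" "c \<in> Aut_on Jp"
    and "a' \<in> Aut_on Jm" "b' \<in> Aut_on J" "c' \<in> Aut_on Jp"
  shows "(a \<circ> b \<circ> c) \<circ> (a' \<circ> b' \<circ> c') = (a \<circ> a') \<circ> (b \<circ> b') \<circ> (c \<circ> c')"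
proof -
  have "b \<circ> a' = a' \<circ> b" "c \<circ> a' = a' \<circ> c" "c \<circ> b' = b' \<circ> c"
    using assms parts_disjoint by (metis Aut_on_disjoint_commute inf_commute)+
  then have left_commute: "b \<circ> (a' \<circ> f) = a' \<circ> (b \<circ> f)" "c \<circ> (a' \<circ> f) = a' \<circ> (c \<circ> f)"
    "c \<circ> (b' \<circ> f) = b' \<circ> (c \<circ> f)" for f
    by (metis comp_assoc)+
  show ?thesis by (simp add: comp_assoc left_commute)
qed

lemma restrict_aut_comp_parts:
  assumes "a \<in> Aut_on Jm" "b \<in> Aut_on J" "c \<in> Aut_on Jp"
  shows "restrict_aut Jm (a \<circ> b \<circ> c) = a" "restrict_aut J (a \<circ> b \<circ> c) = b"
    and "restrict_aut Jp (a \<circ> b \<circ> c) = c"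
  using assms
  by (auto simp: fun_eq_iff restrict_aut_def comp_parts_apply[OF assms] Aut_on_fixes simp del: comp_apply)

lemma comp_restrict_aut_parts:
  assumes "\<And>t. t \<in> Jm \<Longrightarrow> g t \<in> Jm" "\<And>t. t \<in> J \<Longrightarrow> g t \<in> J" "\<And>t. t \<in> Jp \<Longrightarrow> g t \<in> Jp"
  shows "restrict_aut Jm g \<circ> restrict_aut J g \<circ> restrict_aut Jp g = g"
proof
  fix t
  show "(restrict_aut Jm g \<circ> restrict_aut J g \<circ> restrict_aut Jp g) t = g t"
    using parts_cover[of t] parts_disjoint assms by (auto simp: restrict_aut_def disjoint_iff)
qed

end

locale regular_nonempty_interval = nonempty_interval +
  assumes regular: "regular_interval J"
begin

abbreviation "H \<equiv> {g \<in> Aut_on (UNIV::'a set). \<forall>x\<in>J. g x \<in> J}"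

lemma H_eq_single_point: "x \<in> J \<Longrightarrow> H = {g \<in> Aut_on UNIV. g x \<in> J}"
  using regular unfolding regular_interval_def by blast

lemma stabilizer_subset_H: "x \<in> J \<Longrightarrow> stabilizer_on UNIV {x} \<subseteq> H"
  using H_eq_single_point by (auto simp: stabilizer_on_def)

lemma inv_in_H:
  assumes g: "g \<in> H"
  shows "inv g \<in> H"
proof -
  obtain x where x: "x \<in> J" using nonempty by blast
  have gA: "g \<in> Aut_on UNIV" using g by blast
  then have "inv g (g x) = x" using Aut_on_bij bij_is_inj inv_f_f by metis
  moreover have "g x \<in> J" using g x by blast
  ultimately show ?thesis using H_eq_single_point[of "g x"] x Aut_on_inv[OF gA] by simp
qed

lemma is_subgroup_H: "is_subgroup_of H (Aut_on UNIV)"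
  unfolding is_subgroup_of_def by (intro conjI ballI inv_in_H) (auto simp: Aut_on_id Aut_on_comp)

lemma H_preserves_parts:
  assumes g: "g \<in> H"
  shows "g t \<in> J \<longleftrightarrow> t \<in> J" "g t \<in> Jm \<longleftrightarrow> t \<in> Jm" "g t \<in> Jp \<longleftrightarrow> t \<in> Jp"
proof -
  have gA: "g \<in> Aut_on UNIV" using g by blast
  have bij: "bij g" by (rule Aut_on_bij[OF gA])
  have image: "g ` J = J"
  proof
    show "g ` J \<subseteq> J" using g by blast
    show "J \<subseteq> g ` J"
    proof
      fix y assume "y \<in> J"
      then have "inv g y \<in> J" using inv_in_H[OF g] by blast
      moreover have "g (inv g y) = y" using bij by (simp add: bij_is_surj surj_f_inv_f)
      ultimately show "y \<in> g ` J" by (metis imageI)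
    qed
  qed
  show "g t \<in> J \<longleftrightarrow> t \<in> J"
    using inj_image_mem_iff[OF bij_is_inj[OF bij], of t J] image by simp
  show "g t \<in> Jm \<longleftrightarrow> t \<in> Jm"
    using Aut_on_UNIV_lower_part_iff[OF gA, of t J] image by simp
  show "g t \<in> Jp \<longleftrightarrow> t \<in> Jp"
    using Aut_on_UNIV_upper_part_iff[OF gA, of t J] image by simp
qed

lemma comp_restrict_aut_H:
  assumes g: "g \<in> H"
  shows "restrict_aut Jm g \<circ> restrict_aut J g \<circ> restrict_aut Jp g = g"
  by (rule comp_restrict_aut_parts) (simp_all add: H_preserves_parts[OF g])

lemma restrict_aut_H_in_Aut_on:
  assumes g: "g \<in> H"
  shows "restrict_aut Jm g \<in> Aut_on Jm" "restrict_aut J g \<in> Aut_on J" "restrict_aut Jp g \<in> Aut_on Jp"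
  using g by (auto intro!: restrict_aut_in_Aut_on simp only: H_preserves_parts[OF g])

lemma comp_parts_in_H:
  "a \<in> Aut_on Jm \<Longrightarrow> b \<in> Aut_on J \<Longrightarrow> c \<in> Aut_on Jp \<Longrightarrow> a \<circ> b \<circ> c \<in> H"
  by (simp add: comp_parts_in_Aut_on_UNIV comp_parts_apply Aut_on_mem_iff del: comp_apply)

lemma openin_tau_p_H:
  assumes "openin (order_top_on UNIV) J"
  shows "openin (tau_p UNIV) H"
proof -
  obtain x where x: "x \<in> J" using nonempty by blast
  show ?thesis
    unfolding tau_p_def pointwise_top_def H_eq_single_point[OF x]
    by (rule topology_generated_by_Basis) (use assms in blast)
qed

lemma openin_tau_d_H: "openin (tau_d UNIV) H"
  unfolding openin_tau_d_iff
proof (intro conjI ballI)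
  show "H \<subseteq> Aut_on UNIV" by blast
  obtain x where x: "x \<in> J" using nonempty by blast
  fix g assume "g \<in> H"
  then have "(\<circ>) g ` stabilizer_on UNIV {x} \<subseteq> H"
    using stabilizer_subset_H[OF x] is_subgroup_H unfolding is_subgroup_of_def by blast
  then show "\<exists>F. finite F \<and> F \<subseteq> UNIV \<and> (\<circ>) g ` stabilizer_on UNIV F \<subseteq> H" by blast
qed

definition decompose :: "('a \<Rightarrow> 'a) \<Rightarrow> ('a \<Rightarrow> 'a) \<times> ('a \<Rightarrow> 'a) \<times> ('a \<Rightarrow> 'a)" where
  "decompose g = (restrict_aut Jm g, restrict_aut J g, restrict_aut Jp g)"

definition recompose :: "('a \<Rightarrow> 'a) \<times> ('a \<Rightarrow> 'a) \<times> ('a \<Rightarrow> 'a) \<Rightarrow> 'a \<Rightarrow> 'a" where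
  "recompose = (\<lambda>(a, b, c). a \<circ> b \<circ> c)"

lemma recompose_in_H:
  assumes "p \<in> Aut_on Jm \<times> Aut_on J \<times> Aut_on Jp"
  shows "recompose p \<in> H"
proof -
  obtain a b c where "p = (a, b, c)" "a \<in> Aut_on Jm" "b \<in> Aut_on J" "c \<in> Aut_on Jp"
    using assms by (cases p) auto
  then show ?thesis unfolding recompose_def by (simp only: prod.case) (rule comp_parts_in_H)
qed

lemma top_group_iso3_decompose:
  assumes TA: "topspace TA = Aut_on Jm" and TB: "topspace TB = Aut_on J"
    and TC: "topspace TC = Aut_on Jp"
    and dec: "continuous_map (subtopology T H) (prod_topology TA (prod_topology TB TC)) decompose"
    and rec: "continuous_map (prod_topology TA (prod_topology TB TC)) (subtopology T H) recompose"
  shows "top_group_iso3 H T TA TB TC decompose"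
  unfolding top_group_iso3_def
proof (intro conjI ballI)
  show "homeomorphic_map (subtopology T H) (prod_topology TA (prod_topology TB TC)) decompose"
    unfolding homeomorphic_map_maps homeomorphic_maps_def
  proof (intro exI[of _ recompose] conjI dec rec ballI)
    fix g assume "g \<in> topspace (subtopology T H)"
    then have "g \<in> H" by simp
    then show "recompose (decompose g) = g"
      by (simp add: decompose_def recompose_def comp_restrict_aut_H)
  next
    fix p assume "p \<in> topspace (prod_topology TA (prod_topology TB TC))"
    then show "decompose (recompose p) = p"
      using TA TB TC by (auto simp: decompose_def recompose_def restrict_aut_comp_parts)
  qed
next
  fix g h assume "h \<in> H"
  then show "decompose (g \<circ> h) = (fst (decompose g) \<circ> fst (decompose h),
      fst (snd (decompose g)) \<circ> fst (snd (decompose h)), snd (snd (decompose g)) \<circ> snd (snd (decompose h)))"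
    by (simp add: decompose_def restrict_aut_comp H_preserves_parts[OF \<open>h \<in> H\<close>])
qed

lemma continuous_map_decompose_tau_p:
  "continuous_map (subtopology (tau_p UNIV) H)
     (prod_topology (tau_p Jm) (prod_topology (tau_p J) (tau_p Jp))) decompose"
  unfolding decompose_def
  by (intro continuous_map_pairedI continuous_map_restrict_aut_tau_p
      is_interval_lower_part interval is_interval_upper_part H_preserves_parts) blast+

lemma continuous_map_decompose_tau_d:
  "continuous_map (subtopology (tau_d UNIV) H)
     (prod_topology (tau_d Jm) (prod_topology (tau_d J) (tau_d Jp))) decompose"
  unfolding decompose_def
  by (intro continuous_map_pairedI continuous_map_restrict_aut_tau_d is_subgroup_H H_preserves_parts)
    blast+

lemma continuous_map_recompose_tau_p:
  "continuous_map (prod_topology (tau_p Jm) (prod_topology (tau_p J) (tau_p Jp)))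
     (subtopology (tau_p UNIV) H) recompose"
proof -
  let ?P = "prod_topology (tau_p Jm) (prod_topology (tau_p J) (tau_p Jp))"
  have into_H: "recompose p \<in> H" if "p \<in> topspace ?P" for p
    using that by (intro recompose_in_H) simp
  have "continuous_map ?P (order_top_on UNIV) (\<lambda>p. recompose p x)" for x
  proof -
    consider "x \<in> Jm" | "x \<in> J" | "x \<in> Jp" using parts_cover by blast
    then show ?thesis
    proof cases
      case 1
      have "continuous_map ?P (order_top_on UNIV) (\<lambda>p. fst p x)"
        by (rule continuous_map_compose[OF continuous_map_fst
              continuous_map_tau_p_eval[OF is_interval_lower_part 1], unfolded o_def])
      then show ?thesis
        by (rule continuous_map_eq) (use 1 in \<open>auto simp: recompose_def comp_parts_apply simp del: comp_apply\<close>)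
    next
      case 2
      have "continuous_map ?P (order_top_on UNIV) (\<lambda>p. fst (snd p) x)"
        by (rule continuous_map_compose[OF continuous_map_compose[OF continuous_map_snd continuous_map_fst]
              continuous_map_tau_p_eval[OF interval 2], unfolded o_def])
      then show ?thesis
        by (rule continuous_map_eq) (use 2 in \<open>auto simp: recompose_def comp_parts_apply simp del: comp_apply\<close>)
    next
      case 3
      have "continuous_map ?P (order_top_on UNIV) (\<lambda>p. snd (snd p) x)"
        by (rule continuous_map_compose[OF continuous_map_compose[OF continuous_map_snd continuous_map_snd]
              continuous_map_tau_p_eval[OF is_interval_upper_part 3], unfolded o_def])
      then show ?thesis
        by (rule continuous_map_eq) (use 3 in \<open>auto simp: recompose_def comp_parts_apply simp del: comp_apply\<close>)
    qed
  qed
  then show ?thesis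
    using into_H by (auto simp: continuous_map_in_subtopology continuous_map_tau_p_iff)
qed

lemma recompose_stabilizer_cosets:
  assumes abc: "a \<in> Aut_on Jm" "b \<in> Aut_on J" "c \<in> Aut_on Jp"
  shows "recompose ` ((\<circ>) a ` stabilizer_on Jm (F \<inter> Jm) \<times>
      ((\<circ>) b ` stabilizer_on J (F \<inter> J) \<times> (\<circ>) c ` stabilizer_on Jp (F \<inter> Jp)))
    \<subseteq> (\<circ>) (a \<circ> b \<circ> c) ` stabilizer_on UNIV F"
proof
  fix k assume "k \<in> recompose ` ((\<circ>) a ` stabilizer_on Jm (F \<inter> Jm) \<times>
      ((\<circ>) b ` stabilizer_on J (F \<inter> J) \<times> (\<circ>) c ` stabilizer_on Jp (F \<inter> Jp)))"
  then obtain ha hb hc where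
    h: "ha \<in> stabilizer_on Jm (F \<inter> Jm)" "hb \<in> stabilizer_on J (F \<inter> J)" "hc \<in> stabilizer_on Jp (F \<inter> Jp)"
    and k: "k = (a \<circ> ha) \<circ> (b \<circ> hb) \<circ> (c \<circ> hc)"
    by (auto simp: recompose_def)
  then have auts: "ha \<in> Aut_on Jm" "hb \<in> Aut_on J" "hc \<in> Aut_on Jp"
    by (simp_all add: stabilizer_on_def)
  have k_eq: "k = (a \<circ> b \<circ> c) \<circ> (ha \<circ> hb \<circ> hc)"
    using k abc auts by (simp add: comp_parts_mult)
  have "(ha \<circ> hb \<circ> hc) t = t" if "t \<in> F" for t
    using parts_cover[of t] that h comp_parts_apply[OF auts, of t] by (auto simp: stabilizer_on_def)
  then have "ha \<circ> hb \<circ> hc \<in> stabilizer_on UNIV F"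
    using comp_parts_in_Aut_on_UNIV[OF auts] by (simp add: stabilizer_on_def)
  with k_eq show "k \<in> (\<circ>) (a \<circ> b \<circ> c) ` stabilizer_on UNIV F" by blast
qed

lemma continuous_map_recompose_tau_d:
  "continuous_map (prod_topology (tau_d Jm) (prod_topology (tau_d J) (tau_d Jp)))
     (subtopology (tau_d UNIV) H) recompose"
  unfolding continuous_map_in_subtopology
proof (intro conjI)
  let ?P = "prod_topology (tau_d Jm) (prod_topology (tau_d J) (tau_d Jp))"
  have into_H: "recompose p \<in> H" if "p \<in> topspace ?P" for p
    using that by (intro recompose_in_H) simp
  then show "recompose \<in> topspace ?P \<rightarrow> H" by blast
  show "continuous_map ?P (tau_d UNIV) recompose"
  proof (rule continuous_map_into_tau_d)
    show "recompose ` topspace ?P \<subseteq> Aut_on UNIV" using into_H by blast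
    fix p and F :: "'a set" assume p: "p \<in> topspace ?P" and F: "finite F"
    obtain a b c where abc: "p = (a, b, c)" "a \<in> Aut_on Jm" "b \<in> Aut_on J" "c \<in> Aut_on Jp"
      using p by (cases p) auto
    let ?V = "(\<circ>) a ` stabilizer_on Jm (F \<inter> Jm) \<times>
      ((\<circ>) b ` stabilizer_on J (F \<inter> J) \<times> (\<circ>) c ` stabilizer_on Jp (F \<inter> Jp))"
    have "openin ?P ?V"
      using abc F by (simp add: openin_prod_Times_iff openin_tau_d_coset)
    moreover have "p \<in> ?V"
      using abc id_in_stabilizer_on by (auto intro!: image_eqI[of _ _ id])
    moreover have "recompose ` ?V \<subseteq> (\<circ>) (recompose p) ` stabilizer_on UNIV F"
      using recompose_stabilizer_cosets[OF abc(2-4)] abc(1) by (simp add: recompose_def)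
    ultimately show "\<exists>V. openin ?P V \<and> p \<in> V \<and> recompose ` V \<subseteq> (\<circ>) (recompose p) ` stabilizer_on UNIV F"
      by blast
  qed
qed

lemma stabilizer_decomposition:
  assumes x: "x \<in> J"
  shows "{g \<in> Aut_on UNIV. g x = x} =
    {a \<circ> b \<circ> c | a b c. a \<in> Aut_on Jm \<and> b \<in> {b' \<in> Aut_on J. b' x = x} \<and> c \<in> Aut_on Jp}"
proof (intro equalityI subsetI)
  fix g assume "g \<in> {g \<in> Aut_on UNIV. g x = x}"
  then have g: "g \<in> H" "g x = x"
    using stabilizer_subset_H[OF x] by (auto simp: stabilizer_on_def)
  have "g = restrict_aut Jm g \<circ> restrict_aut J g \<circ> restrict_aut Jp g"
    using comp_restrict_aut_H[OF g(1)] by simp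
  moreover note restrict_aut_H_in_Aut_on[OF g(1)]
  moreover have "restrict_aut J g x = x" using g(2) x by (simp add: restrict_aut_def)
  ultimately show "g \<in> {a \<circ> b \<circ> c | a b c. a \<in> Aut_on Jm \<and> b \<in> {b' \<in> Aut_on J. b' x = x} \<and> c \<in> Aut_on Jp}"
    by blast
next
  fix g assume "g \<in> {a \<circ> b \<circ> c | a b c. a \<in> Aut_on Jm \<and> b \<in> {b' \<in> Aut_on J. b' x = x} \<and> c \<in> Aut_on Jp}"
  then show "g \<in> {g \<in> Aut_on UNIV. g x = x}"
    using x by (auto simp: comp_parts_in_Aut_on_UNIV comp_parts_apply simp del: comp_apply)
qed

end

theorem proposition5p1:
  fixes J :: "'a::linorder set"
  assumes "homogeneous_chain TYPE('a)"
    and "regular_interval J" and "proper_interval J" and "J \<noteq> {}"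
  defines "Jm \<equiv> lower_part J" and "Jp \<equiv> upper_part J"
    and "H \<equiv> {g \<in> Aut_on (UNIV::'a set). \<forall>x\<in>J. g x \<in> J}"
  shows "is_subgroup_of H (Aut_on UNIV) \<and> openin (tau_p UNIV) H \<and> openin (tau_d UNIV) H
      \<and> (\<exists>\<phi>. top_group_iso3 H (tau_p UNIV) (tau_p Jm) (tau_p J) (tau_p Jp) \<phi>)
      \<and> (\<exists>\<phi>. top_group_iso3 H (tau_d UNIV) (tau_d Jm) (tau_d J) (tau_d Jp) \<phi>)
      \<and> (\<forall>x\<in>J. {g \<in> Aut_on UNIV. g x = x} =
           {a \<circ> b \<circ> c | a b c. a \<in> Aut_on Jm \<and> b \<in> {b' \<in> Aut_on J. b' x = x} \<and> c \<in> Aut_on Jp})"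
proof -
  interpret regular_nonempty_interval J
  proof unfold_locales
    show "is_interval J" using assms(2) unfolding regular_interval_def by (rule conjunct1)
  qed (fact assms(2,4))+
  show ?thesis
  proof (intro conjI exI ballI)
    show "is_subgroup_of H (Aut_on UNIV)"
      unfolding H_def by (rule is_subgroup_H)
    show "openin (tau_p UNIV) H"
      unfolding H_def using regular_interval_open[OF assms(1-3)] by (rule openin_tau_p_H)
    show "openin (tau_d UNIV) H"
      unfolding H_def by (rule openin_tau_d_H)
    show "top_group_iso3 H (tau_p UNIV) (tau_p Jm) (tau_p J) (tau_p Jp) decompose"
      unfolding H_def Jm_def Jp_def
      by (intro top_group_iso3_decompose continuous_map_decompose_tau_p continuous_map_recompose_tau_p)
        simp_all
    show "top_group_iso3 H (tau_d UNIV) (tau_d Jm) (tau_d J) (tau_d Jp) decompose"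
      unfolding H_def Jm_def Jp_def
      by (intro top_group_iso3_decompose continuous_map_decompose_tau_d continuous_map_recompose_tau_d)
        simp_all
    fix x assume "x \<in> J"
    then show "{g \<in> Aut_on UNIV. g x = x} =
        {a \<circ> b \<circ> c | a b c. a \<in> Aut_on Jm \<and> b \<in> {b' \<in> Aut_on J. b' x = x} \<and> c \<in> Aut_on Jp}"
      unfolding Jm_def Jp_def by (rule stabilizer_decomposition)
  qed
qed

end
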